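(* Let $A$ be a deterministic KAT automaton over $(\Sigma,T_0)$ and $\mathfrak{t}:T_0\to\mathsf{BA}(T_1)$. If $\mathsf{compose}_{\mathfrak{t}}(A)$ is $k$-dense, then so is $A$.
   Context: Atoms $\mathsf{At}_T=2^T$; $\mathsf{BA}(T)$ Boolean expressions over $T$; $\beta\le b$ means $b$ holds under the assignment making exactly the tests in $\beta$ true. Deterministic KAT automaton over $(\Sigma,T)$: $A=(Q,\delta,\iota)$, $Q$ finite, $\delta:Q\times\mathsf{At}_T\to\{\mathsf{accept},\mathsf{reject}\}+\Sigma\times Q$, $\iota:\mathsf{At}_T\to\{\mathsf{accept},\mathsf{reject}\}+\Sigma\times Q$. Write $q\xrightarrow{\alpha\mid p}_Aq'$ for $\delta(q,\alpha)=(p,q')$; $q$ accepts $\alpha$ if $\delta(q,\alpha)=\mathsf{accept}$. $\mathsf{compose}_{\mathfrak{t}}(A)$: for $\beta\in\mathsf{At}_{T_1}$ let $\mathfrak{t}^{-1}(\beta)\in\mathsf{At}_{T_0}$ be the atom with $t\in\mathfrak{t}^{-1}(\beta)$ iff $\beta\le\mathfrak{t}(t)$; $\mathsf{compose}_{\mathfrak{t}}(A)=(Q,\delta',\iota')$ over $(\Sigma,T_1)$ with $\delta'(q,\beta)=\delta(q,\mathfrak{t}^{-1}(\beta))$, $\iota'(\beta)=\iota(\mathfrak{t}^{-1}(\beta))$. An automaton $(Q,\delta,\iota)$ over $(\Sigma,T)$ is $k$-dense if there exist non-empty subsets $S_1,\dots,S_k\subseteq Q$, distinct atoms $\alpha_1,\dots,\alpha_k\in\mathsf{At}_T$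 and, for all $1\le i,j\le k$ and $q\in S_i$, an action $p_{qj}\in\Sigma$, such that for all $i,j,m\le k$: (1) if $q\in S_i$ then $q$ accepts $\alpha_i$; (2) if $i\ne j$ and $q\in S_i$, there is $q'\in S_j$ with $q\xrightarrow{\alpha_j\mid p_{qj}}q'$; (3) if $q\in S_i$ and $q'\in S_j$ with $p_{qm}=p_{q'm}$, then $i=j$. *)

theory Defs
  imports Main
begin

datatype 't bexp = BFalse | BTrue | BTest 't | BNot "'t bexp"
  | BAnd "'t bexp" "'t bexp" | BOr "'t bexp" "'t bexp"

fun bvars :: "'t bexp \<Rightarrow> 't set" where
  "bvars BFalse = {}" | "bvars BTrue = {}" | "bvars (BTest t) = {t}"
| "bvars (BNot b) = bvars b"
| "bvars (BAnd b c) = bvars b \<union> bvars c" | "bvars (BOr b c) = bvars b \<union> bvars c"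

definition BA :: "'t set \<Rightarrow> 't bexp set" where
  "BA T = {b. bvars b \<subseteq> T}"

text \<open>Atoms of T: subsets of T (the tests that are true).\<close>
definition atoms :: "'t set \<Rightarrow> 't set set" where
  "atoms T = Pow T"

text \<open>beta \<le> b : b holds under the assignment making exactly the tests in beta true.\<close>
fun sat :: "'t set \<Rightarrow> 't bexp \<Rightarrow> bool" where
  "sat \<beta> BFalse = False" | "sat \<beta> BTrue = True" | "sat \<beta> (BTest t) = (t \<in> \<beta>)"
| "sat \<beta> (BNot b) = (\<not> sat \<beta> b)"
| "sat \<beta> (BAnd b c) = (sat \<beta> b \<and> sat \<beta> c)"
| "sat \<beta> (BOr b c) = (sat \<beta> b \<or> sat \<beta> c)"

datatype ('p, 'q) out = Accept | Reject | Step 'p 'q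

type_synonym ('q, 't, 'p) kat_aut =
  "'q set \<times> ('q \<Rightarrow> 't set \<Rightarrow> ('p, 'q) out) \<times> ('t set \<Rightarrow> ('p, 'q) out)"

definition outs :: "'p set \<Rightarrow> 'q set \<Rightarrow> ('p, 'q) out set" where
  "outs \<Sigma> Q = {Accept, Reject} \<union> {Step p q | p q. p \<in> \<Sigma> \<and> q \<in> Q}"

definition kat_automaton :: "'p set \<Rightarrow> 't set \<Rightarrow> ('q, 't, 'p) kat_aut \<Rightarrow> bool" where
  "kat_automaton \<Sigma> T A = (case A of (Q, \<delta>, \<iota>) \<Rightarrow>
     finite Q \<and> finite T \<and>
     (\<forall>q\<in>Q. \<forall>\<alpha>\<in>atoms T. \<delta> q \<alpha> \<in> outs \<Sigma> Q) \<and>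
     (\<forall>\<alpha>\<in>atoms T. \<iota> \<alpha> \<in> outs \<Sigma> Q))"

definition tinv :: "'t0 set \<Rightarrow> ('t0 \<Rightarrow> 't1 bexp) \<Rightarrow> 't1 set \<Rightarrow> 't0 set" where
  "tinv T0 tr \<beta> = {t \<in> T0. sat \<beta> (tr t)}"

definition compose :: "'t0 set \<Rightarrow> ('t0 \<Rightarrow> 't1 bexp) \<Rightarrow> ('q, 't0, 'p) kat_aut \<Rightarrow> ('q, 't1, 'p) kat_aut" where
  "compose T0 tr A = (case A of (Q, \<delta>, \<iota>) \<Rightarrow>
     (Q, (\<lambda>q \<beta>. \<delta> q (tinv T0 tr \<beta>)), (\<lambda>\<beta>. \<iota> (tinv T0 tr \<beta>))))"

definition k_dense :: "'p set \<Rightarrow> 't set \<Rightarrow> ('q, 't, 'p) kat_aut \<Rightarrow> nat \<Rightarrow> bool" where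
  "k_dense \<Sigma> T A k = (case A of (Q, \<delta>, \<iota>) \<Rightarrow>
     (\<exists>(S :: nat \<Rightarrow> 'q set) (\<alpha> :: nat \<Rightarrow> 't set) (p :: 'q \<Rightarrow> nat \<Rightarrow> 'p).
        (\<forall>i\<in>{1..k}. S i \<noteq> {} \<and> S i \<subseteq> Q \<and> \<alpha> i \<in> atoms T) \<and>
        inj_on \<alpha> {1..k} \<and>
        (\<forall>i\<in>{1..k}. \<forall>j\<in>{1..k}. \<forall>q\<in>S i. p q j \<in> \<Sigma>) \<and>
        (\<forall>i\<in>{1..k}. \<forall>q\<in>S i. \<delta> q (\<alpha> i) = Accept) \<and>
        (\<forall>i\<in>{1..k}. \<forall>j\<in>{1..k}. i \<noteq> j \<longrightarrow>
            (\<forall>q\<in>S i. \<exists>q'\<in>S j. \<delta> q (\<alpha> j) = Step (p q j) q')) \<and>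
        (\<forall>i\<in>{1..k}. \<forall>j\<in>{1..k}. \<forall>m\<in>{1..k}. \<forall>q\<in>S i. \<forall>q'\<in>S j.
            p q m = p q' m \<longrightarrow> i = j)))"

end

theory Submission
  imports Defs
begin

text \<open>A witness of density for \<open>compose\<^sub>t(A)\<close> with atoms \<open>\<beta>\<^sub>i\<close> is a witness for \<open>A\<close> with
  atoms \<open>t\<^sup>-\<^sup>1(\<beta>\<^sub>i)\<close>, since the transitions involved are literally the same. The only
  condition that does not transfer verbatim is the distinctness of the atoms, and it is
  in fact redundant: a state of \<open>S\<^sub>i\<close> accepts \<open>\<alpha>\<^sub>i\<close> but takes a step on \<open>\<alpha>\<^sub>j\<close> for
  \<open>j \<noteq> i\<close>. The argument works for any map of atoms in place of \<open>t\<^sup>-\<^sup>1\<close>.\<close>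

definition reindex_atoms ::
    "('t1 set \<Rightarrow> 't0 set) \<Rightarrow> ('q, 't0, 'p) kat_aut \<Rightarrow> ('q, 't1, 'p) kat_aut" where
  "reindex_atoms f A = (case A of (Q, \<delta>, \<iota>) \<Rightarrow> (Q, \<lambda>q \<beta>. \<delta> q (f \<beta>), \<lambda>\<beta>. \<iota> (f \<beta>)))"

lemma compose_eq_reindex_atoms: "compose T0 tr A = reindex_atoms (tinv T0 tr) A"
  by (simp add: compose_def reindex_atoms_def)

lemma tinv_in_atoms: "tinv T0 tr \<beta> \<in> atoms T0"
  by (auto simp: tinv_def atoms_def)

lemma accepted_atoms_inj_on:
  assumes "\<forall>i\<in>I. S i \<noteq> {}"
    and "\<forall>i\<in>I. \<forall>q\<in>S i. \<delta> q (\<alpha> i) = Accept"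
    and "\<forall>i\<in>I. \<forall>j\<in>I. i \<noteq> j \<longrightarrow> (\<forall>q\<in>S i. \<delta> q (\<alpha> j) \<noteq> Accept)"
  shows "inj_on \<alpha> I"
proof (rule inj_onI, rule ccontr)
  fix i j assume i: "i \<in> I" and j: "j \<in> I" and eq: "\<alpha> i = \<alpha> j" and "i \<noteq> j"
  from assms(1) i obtain q where "q \<in> S i" by blast
  with assms(2,3) i j \<open>i \<noteq> j\<close> eq show False by metis
qed

lemma k_dense_reindex_atoms:
  assumes f: "\<forall>\<beta>\<in>atoms T1. f \<beta> \<in> atoms T0"
    and dense: "k_dense \<Sigma> T1 (reindex_atoms f A) k"
  shows "k_dense \<Sigma> T0 A k"
proof -
  obtain Q \<delta> \<iota> where A: "A = (Q, \<delta>, \<iota>)" by (cases A) auto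
  from dense obtain S \<alpha> p where
    sets: "\<forall>i\<in>{1..k}. S i \<noteq> {} \<and> S i \<subseteq> Q \<and> \<alpha> i \<in> atoms T1" and
    actions: "\<forall>i\<in>{1..k}. \<forall>j\<in>{1..k}. \<forall>q\<in>S i. p q j \<in> \<Sigma>" and
    accept: "\<forall>i\<in>{1..k}. \<forall>q\<in>S i. \<delta> q (f (\<alpha> i)) = Accept" and
    step: "\<forall>i\<in>{1..k}. \<forall>j\<in>{1..k}. i \<noteq> j \<longrightarrow>
      (\<forall>q\<in>S i. \<exists>q'\<in>S j. \<delta> q (f (\<alpha> j)) = Step (p q j) q')" and
    separate: "\<forall>i\<in>{1..k}. \<forall>j\<in>{1..k}. \<forall>m\<in>{1..k}. \<forall>q\<in>S i. \<forall>q'\<in>S j.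
      p q m = p q' m \<longrightarrow> i = j"
    unfolding A k_dense_def reindex_atoms_def prod.case by (elim exE conjE)
  have inj: "inj_on (\<lambda>i. f (\<alpha> i)) {1..k}"
  proof (rule accepted_atoms_inj_on)
    show "\<forall>i\<in>{1..k}. \<forall>j\<in>{1..k}. i \<noteq> j \<longrightarrow> (\<forall>q\<in>S i. \<delta> q (f (\<alpha> j)) \<noteq> Accept)"
      using step by fastforce
  qed (use sets accept in auto)
  have sets_T0: "\<forall>i\<in>{1..k}. S i \<noteq> {} \<and> S i \<subseteq> Q \<and> f (\<alpha> i) \<in> atoms T0"
    using sets f by blast
  show ?thesis
    unfolding A k_dense_def prod.case
    by (intro exI[of _ S] exI[of _ "\<lambda>i. f (\<alpha> i)"] exI[of _ p] conjI)
      (fact sets_T0 inj actions accept step separate)+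
qed

theorem lemma6p19:
  fixes \<Sigma> :: "'p set" and T0 :: "'t0 set" and T1 :: "'t1 set"
    and A :: "('q, 't0, 'p) kat_aut" and tr :: "'t0 \<Rightarrow> 't1 bexp" and k :: nat
  assumes "kat_automaton \<Sigma> T0 A"
    and "finite T1"
    and "\<forall>t\<in>T0. tr t \<in> BA T1"
    and "k_dense \<Sigma> T1 (compose T0 tr A) k"
  shows "k_dense \<Sigma> T0 A k"
  using assms(4) tinv_in_atoms
  by (auto simp: compose_eq_reindex_atoms intro: k_dense_reindex_atoms)

end
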